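(* Let $G$ be a graph with maximum degree $\Delta\ge 1$ such that for every $i\in\{1,\ldots,\Delta\}$ there is a vertex of $G$ of degree $i$. Then $wr(G)\ge \log_3 \Delta$.
   Context: All graphs are finite, simple and undirected. For a set $E'$ of edges of a graph, the subgraph induced by $E'$ is the graph whose edge set is $E'$ and whose vertex set is the set of endpoints of edges in $E'$. A graph is weakly semiregular if there are two numbers $a,b$ (not necessarily distinct) such that the degree of every vertex is $a$ or $b$. The weakly semiregular number $wr(G)$ of a graph $G$ is the minimum number of subsets into which $E(G)$ can be partitioned so that the subgraph induced by each subset is weakly semiregular. *)

theory Defs
  imports Complex_Main
begin

definition simple_graph :: "'a set \<Rightarrow> 'a set set \<Rightarrow> bool" where
  "simple_graph V E \<longleftrightarrow> finite V \<and> (\<forall>e\<in>E. e \<subseteq> V \<and> card e = 2)"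

definition degree :: "'a set set \<Rightarrow> 'a \<Rightarrow> nat" where
  "degree E v = card {e\<in>E. v \<in> e}"

definition max_degree :: "'a set \<Rightarrow> 'a set set \<Rightarrow> nat" where
  "max_degree V E = Max (insert 0 (degree E ` V))"

text \<open>The subgraph induced by the edge set F has vertex set \<Union>F (the endpoints).
  It is weakly semiregular if all its vertex degrees lie in {a,b} for some a, b.\<close>
definition weakly_semiregular_edges :: "'a set set \<Rightarrow> bool" where
  "weakly_semiregular_edges F \<longleftrightarrow> (\<exists>a b. \<forall>v\<in>\<Union>F. degree F v = a \<or> degree F v = b)"

definition wr_partition :: "'a set set \<Rightarrow> nat \<Rightarrow> bool" where
  "wr_partition E k \<longleftrightarrow> (\<exists>c. (\<forall>e\<in>E. c e < k) \<and>
      (\<forall>i<k. weakly_semiregular_edges {e\<in>E. c e = i}))"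

definition wr :: "'a set set \<Rightarrow> nat" where
  "wr E = (LEAST k. wr_partition E k)"

end

theory Submission
  imports Defs "HOL-Library.FuncSet"
begin

text \<open>If E is split into k weakly semiregular classes with degrees in {a_i, b_i}, the degree of a
  vertex is a sum of k terms, the i-th of which is 0, a_i or b_i; so at most 3^k distinct degrees
  occur. A graph realising every degree 1, ..., \<Delta> therefore needs \<Delta> \<le> 3^wr(G).\<close>

lemma degree_outside_Union:
  assumes "v \<notin> \<Union>F"
  shows "degree F v = 0"
proof -
  have "{e\<in>F. v \<in> e} = {}"
    using assms by blast
  then show ?thesis
    unfolding degree_def by (metis card.empty)
qed

lemma weakly_semiregular_degrees:
  assumes "weakly_semiregular_edges F"
  obtains a b where "\<And>v. degree F v \<in> {0, a, b}"
proof -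
  from assms obtain a b where "\<forall>v\<in>\<Union>F. degree F v = a \<or> degree F v = b"
    unfolding weakly_semiregular_edges_def by blast
  then have "degree F v \<in> {0, a, b}" for v
    by (cases "v \<in> \<Union>F") (auto simp: degree_outside_Union)
  then show thesis by (rule that)
qed

lemma degree_sum_classes:
  assumes "finite E" and "\<forall>e\<in>E. c e < (k::nat)"
  shows "degree E v = (\<Sum>i<k. degree {e\<in>E. c e = i} v)"
proof -
  have "{e\<in>E. v \<in> e} = (\<Union>i<k. {e\<in>E. c e = i \<and> v \<in> e})"
    using assms(2) by auto
  then have "degree E v = card (\<Union>i<k. {e\<in>E. c e = i \<and> v \<in> e})"
    by (simp add: degree_def)
  also have "\<dots> = (\<Sum>i<k. card {e\<in>E. c e = i \<and> v \<in> e})"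
    by (rule card_UN_disjoint) (use assms(1) in auto)
  finally show ?thesis
    by (simp add: degree_def)
qed

lemma wr_partition_card:
  assumes "finite E"
  shows "wr_partition E (card E)"
proof -
  obtain f where f: "bij_betw f E {0..<card E}"
    using assms ex_bij_betw_finite_nat by blast
  have "weakly_semiregular_edges {e\<in>E. f e = i}" for i
  proof -
    have "degree {e\<in>E. f e = i} v = 1" if "v \<in> \<Union>{e\<in>E. f e = i}" for v
    proof -
      from that obtain e where e: "e \<in> E" "f e = i" "v \<in> e" by auto
      with f have "{x\<in>{e\<in>E. f e = i}. v \<in> x} = {e}"
        by (auto simp: bij_betw_def inj_on_def)
      then show ?thesis by (simp add: degree_def)
    qed
    then show ?thesis unfolding weakly_semiregular_edges_def by blast
  qed
  moreover have "\<forall>e\<in>E. f e < card E"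
    using f by (auto simp: bij_betw_def)
  ultimately show ?thesis unfolding wr_partition_def by blast
qed

lemma wr_partition_wr:
  assumes "finite E"
  shows "wr_partition E (wr E)"
  unfolding wr_def by (rule LeastI[where P = "wr_partition E", OF wr_partition_card[OF assms]])

lemma card_degrees_le_three_power:
  assumes "finite E" and "wr_partition E k"
  shows "card (degree E ` V) \<le> 3 ^ k"
proof -
  from assms(2) obtain c where c: "\<forall>e\<in>E. c e < k"
    and ws: "\<forall>i<k. weakly_semiregular_edges {e\<in>E. c e = i}"
    unfolding wr_partition_def by blast
  define F where "F i = {e\<in>E. c e = i}" for i
  have "\<exists>a b. \<forall>v. degree (F i) v \<in> {0, a, b}" if "i < k" for i
    using weakly_semiregular_degrees[OF ws[rule_format, OF that]] unfolding F_def by blast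
  then obtain a b where ab: "\<And>i v. i < k \<Longrightarrow> degree (F i) v \<in> {0, a i, b i}"
    by metis
  define P where "P = (\<Pi>\<^sub>E i\<in>{..<k}. {0, a i, b i})"
  have fin_P: "finite P"
    unfolding P_def by (simp add: finite_PiE)
  have "degree E v \<in> (\<lambda>f. \<Sum>i<k. f i) ` P" for v
  proof (rule image_eqI)
    show "degree E v = (\<Sum>i<k. (\<lambda>i\<in>{..<k}. degree (F i) v) i)"
      using degree_sum_classes[OF assms(1) c] by (simp add: F_def)
    show "(\<lambda>i\<in>{..<k}. degree (F i) v) \<in> P"
      using ab by (simp add: P_def PiE_iff)
  qed
  then have "card (degree E ` V) \<le> card ((\<lambda>f. \<Sum>i<k. f i) ` P)"
    using fin_P by (intro card_mono) auto
  also have "\<dots> \<le> card P"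
    using fin_P by (rule card_image_le)
  also have "\<dots> = (\<Prod>i<k. card {0, a i, b i})"
    unfolding P_def by (simp add: card_PiE)
  also have "\<dots> \<le> (\<Prod>i<k. 3)"
    by (rule prod_mono) (simp add: card_insert_if)
  finally show ?thesis
    by simp
qed

lemma max_degree_le_card_degrees:
  assumes "finite V" and "\<forall>i\<in>{1..max_degree V E}. \<exists>v\<in>V. degree E v = i"
  shows "max_degree V E \<le> card (degree E ` V)"
proof -
  have "{1..max_degree V E} \<subseteq> degree E ` V"
    using assms(2) by (auto intro: sym)
  then have "card {1..max_degree V E} \<le> card (degree E ` V)"
    by (rule card_mono[OF finite_imageI[OF assms(1)]])
  then show ?thesis
    by simp
qed

theorem mainTheorem4:
  fixes V :: "'a set" and E :: "'a set set"
  assumes "simple_graph V E"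
    and "max_degree V E \<ge> 1"
    and "\<forall>i\<in>{1..max_degree V E}. \<exists>v\<in>V. degree E v = i"
  shows "real (wr E) \<ge> log 3 (real (max_degree V E))"
proof -
  have fin_V: "finite V"
    using assms(1) by (simp add: simple_graph_def)
  moreover have "E \<subseteq> Pow V"
    using assms(1) by (auto simp: simple_graph_def)
  ultimately have fin_E: "finite E"
    by (meson finite_Pow_iff finite_subset)
  have "max_degree V E \<le> card (degree E ` V)"
    by (rule max_degree_le_card_degrees[OF fin_V assms(3)])
  also have "\<dots> \<le> 3 ^ wr E"
    by (rule card_degrees_le_three_power[OF fin_E wr_partition_wr[OF fin_E]])
  finally have "real (max_degree V E) \<le> 3 ^ wr E"
    by (metis of_nat_le_iff of_nat_numeral of_nat_power)
  then show ?thesis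
    using assms(2) by (intro log_of_power_le) auto
qed

end
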